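(* Let $A$ and $B$ be symmetric $N\times N$ real matrices, and suppose $B$ has only $K\le N$ non-zero eigenvalues $\lambda_1^B,\dots,\lambda_K^B$. Let $\lambda_1^A,\dots,\lambda_K^A$ be the $K$ largest in absolute value eigenvalues of $A$. Then $$\Big|\sum_{k=1}^K\lambda_k^A-\sum_{k=1}^K\lambda_k^B\Big|\le 3K\|A-B\|.$$
   Context: $\|\cdot\|$ denotes the spectral (operator) norm. Eigenvalues are counted with multiplicity. *)

theory Defs
  imports "HOL-Analysis.Analysis"
begin

definition spec_norm :: "real^'n^'n \<Rightarrow> real" where
  "spec_norm M = onorm (\<lambda>x. M *v x)"

definition eigenvalue_list :: "real^'n^'n \<Rightarrow> real list \<Rightarrow> bool" where
  "eigenvalue_list M es \<longleftrightarrow> length es = CARD('n) \<and>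
     (\<forall>x. det (mat x - M) = (\<Prod>e\<leftarrow>es. x - e))"

end

theory Submission
  imports Defs "HOL-Computational_Algebra.Polynomial"
begin

text \<open>
  Both matrices are orthogonally diagonalisable, and the given eigenvalue lists are their
  diagonals up to order. With \<open>\<epsilon> = \<parallel>A - B\<parallel>\<close> the quadratic forms satisfy
  \<open>\<bar>x \<bullet> A x - x \<bullet> B x\<bar> \<le> \<epsilon> \<parallel>x\<parallel>\<^sup>2\<close>, and a dimension count (Weyl) shows that \<open>A\<close> has at most
  as many eigenvalues above \<open>t + \<epsilon>\<close> as \<open>B\<close> has above \<open>t\<close>, and vice versa. Hence the
  increasingly sorted spectra are pointwise \<open>\<epsilon>\<close>-close, so the eigenvalues of \<open>B\<close> can be
  rearranged to lie within \<open>\<epsilon>\<close> of those of \<open>A\<close>, index by index.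

  After this rearrangement let \<open>T\<close> be the \<open>K\<close> positions of the non-zero eigenvalues of \<open>B\<close> and
  \<open>S\<close> the first \<open>K\<close> positions; away from \<open>T\<close> the eigenvalues of \<open>A\<close> have modulus at most \<open>\<epsilon>\<close>.
  The difference of the two sums splits into matching errors over \<open>T\<close> and the eigenvalues of
  \<open>A\<close> over \<open>S - T\<close> and over \<open>T - S\<close>, each contributing at most \<open>K \<epsilon>\<close>; on \<open>T - S\<close> this holds
  because every such eigenvalue is dominated in modulus by one indexed by \<open>S - T\<close>.
\<close>

section \<open>Spectral theorem for symmetric matrices\<close>

lemma symmetric_matrix_inner:
  fixes M :: "real^'n^'n"
  assumes "transpose M = M"
  shows "(M *v x) \<bullet> y = x \<bullet> (M *v y)"
  by (metis assms dot_lmul_matrix transpose_matrix_vector)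

lemma nonpos_quadratic_imp_linear_coeff_eq_0:
  fixes c d :: real
  assumes "\<And>t. 2 * t * c + t\<^sup>2 * d \<le> 0"
  shows "c = 0"
proof (rule ccontr)
  assume "c \<noteq> 0"
  define a where "a = \<bar>d\<bar> + 1"
  have "a > 0" unfolding a_def by simp
  have "a\<^sup>2 * (2 * (c / a) * c + (c / a)\<^sup>2 * d) \<le> 0"
    using assms[of "c / a"] by (simp add: mult_nonneg_nonpos)
  moreover have "a\<^sup>2 * (2 * (c / a) * c + (c / a)\<^sup>2 * d) = c\<^sup>2 * (2 * a + d)"
    using \<open>a > 0\<close> by (simp add: field_simps power2_eq_square)
  moreover have "c\<^sup>2 * (2 * a + d) > 0"
    using \<open>c \<noteq> 0\<close> unfolding a_def by (intro mult_pos_pos) auto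
  ultimately show False by linarith
qed

text \<open>A maximiser of the Rayleigh quotient on the unit sphere of S is an eigenvector.\<close>
lemma invariant_subspace_has_eigenvector:
  fixes M :: "real^'n^'n"
  assumes sym: "transpose M = M" and S: "subspace S" "S \<noteq> {0}"
    and inv: "\<And>x. x \<in> S \<Longrightarrow> M *v x \<in> S"
  obtains v where "v \<in> S" "norm v = 1" "M *v v = (v \<bullet> (M *v v)) *\<^sub>R v"
proof -
  let ?K = "S \<inter> sphere 0 1"
  obtain x0 where x0: "x0 \<in> S" "x0 \<noteq> 0" using S subspace_0 by blast
  have "compact ?K"
    using S by (simp add: closed_subspace closed_Int_compact)
  moreover have "x0 /\<^sub>R norm x0 \<in> ?K" using x0 S by (simp add: subspace_scale)
  then have "?K \<noteq> {}" by blast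
  moreover have "continuous_on ?K (\<lambda>x. x \<bullet> (M *v x))"
    by (intro continuous_intros linear_continuous_on matrix_vector_mul_bounded_linear)
  ultimately obtain v where v: "v \<in> ?K"
    and vmax: "\<And>y. y \<in> ?K \<Longrightarrow> y \<bullet> (M *v y) \<le> v \<bullet> (M *v v)"
    using continuous_attains_sup[of ?K "\<lambda>x. x \<bullet> (M *v x)"] by blast
  define l where "l = v \<bullet> (M *v v)"
  have vS: "v \<in> S" and nv: "norm v = 1" using v by auto
  have vv: "v \<bullet> v = 1" using nv by (simp add: norm_eq_1)
  have bound: "y \<bullet> (M *v y) \<le> l * (y \<bullet> y)" if "y \<in> S" for y
  proof (cases "y = 0")
    case False
    have "y /\<^sub>R norm y \<in> ?K" using that False S by (simp add: subspace_scale)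
    then have "(y /\<^sub>R norm y) \<bullet> (M *v (y /\<^sub>R norm y)) \<le> l" using vmax l_def by blast
    then have "(y \<bullet> (M *v y)) / (norm y)\<^sup>2 \<le> l"
      by (simp add: matrix_vector_mult_scaleR power2_eq_square divide_inverse mult_ac)
    then show ?thesis using False
      by (simp add: divide_le_eq power2_norm_eq_inner[symmetric] mult.commute)
  qed simp
  have orth: "w \<bullet> (M *v v) = 0" if w: "w \<in> S" "w \<bullet> v = 0" for w
  proof (rule nonpos_quadratic_imp_linear_coeff_eq_0)
    fix t :: real
    have "v + t *\<^sub>R w \<in> S" using S vS w by (simp add: subspace_add subspace_scale)
    from bound[OF this] show "2 * t * (w \<bullet> (M *v v)) + t\<^sup>2 * (w \<bullet> (M *v w) - l * (w \<bullet> w)) \<le> 0"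
      using symmetric_matrix_inner[OF sym, of v w] w
      by (simp add: matrix_vector_right_distrib matrix_vector_mult_scaleR inner_add_left
          inner_add_right l_def vv inner_commute algebra_simps power2_eq_square)
  qed
  define r where "r = M *v v - l *\<^sub>R v"
  have "r \<in> S" unfolding r_def using S vS inv by (simp add: subspace_diff subspace_scale)
  moreover have "r \<bullet> v = 0"
    unfolding r_def l_def using vv by (simp add: inner_diff_left inner_commute[of "M *v v"])
  ultimately have "r \<bullet> r = 0"
    using orth by (simp add: r_def inner_diff_right)
  then show ?thesis using that vS nv unfolding r_def l_def by auto
qed

lemma invariant_subspace_orthonormal_eigenbasis:
  fixes M :: "real^'n^'n"
  assumes sym: "transpose M = M"
  shows "subspace S \<Longrightarrow> (\<And>x. x \<in> S \<Longrightarrow> M *v x \<in> S) \<Longrightarrow>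
    \<exists>B. finite B \<and> B \<subseteq> S \<and> pairwise orthogonal B \<and> card B = dim S \<and>
        (\<forall>x\<in>B. norm x = 1 \<and> M *v x = (x \<bullet> (M *v x)) *\<^sub>R x)"
proof (induction "dim S" arbitrary: S)
  case 0
  then show ?case by (intro exI[of _ "{}"]) auto
next
  case (Suc n)
  then have "S \<noteq> {0}" by (metis dim_eq_0 nat.simps(3) order_refl)
  then obtain v where vS: "v \<in> S" and nv: "norm v = 1" and ev: "M *v v = (v \<bullet> (M *v v)) *\<^sub>R v"
    using invariant_subspace_has_eigenvector[OF sym Suc.prems(1) _ Suc.prems(2)] by blast
  define S' where "S' = {x \<in> S. \<forall>y \<in> span {v}. orthogonal y x}"
  have S'_eq: "S' = S \<inter> {x. v \<bullet> x = 0}"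
    unfolding S'_def by (auto simp: span_singleton orthogonal_def)
  have sub': "subspace S'"
    unfolding S'_eq using Suc.prems(1) by (simp add: subspace_inter subspace_hyperplane)
  have "v \<noteq> 0" using nv by auto
  then have "dim S' + 1 = dim S"
    using dim_subspace_orthogonal_to_vectors[of "span {v}" S] vS Suc.prems(1)
    by (simp add: S'_def span_minimal dim_insert)
  then have dim': "n = dim S'" using Suc.hyps(2) by simp
  have inv': "M *v x \<in> S'" if "x \<in> S'" for x
  proof -
    have "v \<bullet> (M *v x) = (M *v v) \<bullet> x" using symmetric_matrix_inner[OF sym, of v x] by simp
    also have "\<dots> = (v \<bullet> (M *v v)) * (v \<bullet> x)" by (subst ev) simp
    finally show ?thesis using that Suc.prems(2) unfolding S'_eq by auto
  qed
  obtain B' where B': "finite B'" "B' \<subseteq> S'" "pairwise orthogonal B'" "card B' = dim S'"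
    "\<forall>x\<in>B'. norm x = 1 \<and> M *v x = (x \<bullet> (M *v x)) *\<^sub>R x"
    using Suc.hyps(1)[OF dim' sub' inv'] by blast
  have "v \<notin> B'" using B'(2) nv unfolding S'_eq by (auto simp: norm_eq_1)
  then show ?case
    using B' nv ev vS Suc.hyps(2) dim' unfolding S'_eq
    by (intro exI[of _ "insert v B'"])
       (auto simp: pairwise_insert orthogonal_def inner_commute)
qed

lemma symmetric_matrix_diagonalizable:
  fixes M :: "real^'n^'n"
  assumes sym: "transpose M = M"
  obtains Q \<mu> where "orthogonal_matrix Q" "\<And>i. M *v column i Q = \<mu> i *\<^sub>R column i Q"
proof -
  obtain B where B: "finite B" "pairwise orthogonal B" "card B = CARD('n)"
    "\<forall>x\<in>B. norm x = 1 \<and> M *v x = (x \<bullet> (M *v x)) *\<^sub>R x"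
    using invariant_subspace_orthonormal_eigenbasis[OF sym, of UNIV] by (auto simp: dim_UNIV)
  then obtain f where f: "bij_betw f (UNIV::'n set) B"
    by (metis finite_class.finite_UNIV finite_same_card_bij)
  have col: "column j (\<chi> i j. f j $ i) = f j" for j by (simp add: column_def vec_eq_iff)
  have "orthogonal_matrix (\<chi> i j. f j $ i)"
    using B(2,4) bij_betwE[OF f] bij_betw_imp_inj_on[OF f]
    by (auto simp: orthogonal_matrix_orthonormal_columns col pairwise_def inj_on_def)
       (metis UNIV_I)
  moreover have "M *v column i (\<chi> i j. f j $ i) = (f i \<bullet> (M *v f i)) *\<^sub>R column i (\<chi> i j. f j $ i)" for i
    using bij_betwE[OF f] B(4) by (simp add: col)
  ultimately show thesis by (rule that)
qed

lemma column_matrix_matrix_mult: "column j (N ** Q) = N *v column j (Q::real^'n^'n)"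
  by (simp add: vec_eq_iff matrix_matrix_mult_def matrix_vector_mult_def column_def)

lemma mat_matrix_vector_mult: "mat x *v (v::real^'n) = x *\<^sub>R v"
  by (simp add: vec_eq_iff matrix_vector_mult_def mat_def if_distrib[of "\<lambda>a. a * _"] cong: if_cong)

lemma transpose_matrix_mult_entry:
  "(transpose Q ** P) $ i $ j = column i Q \<bullet> column j (P::real^'n^'n)"
  by (simp add: matrix_matrix_mult_def transpose_def column_def inner_vec_def mult.commute)

lemma orthogonal_matrix_column_inner:
  fixes Q :: "real^'n^'n"
  assumes "orthogonal_matrix Q"
  shows "column i Q \<bullet> column j Q = (if i = j then 1 else 0)"
  using assms by (auto simp: orthogonal_matrix_orthonormal_columns orthogonal_def norm_eq_1)

lemma orthogonal_matrix_column_expansion: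
  fixes P :: "real^'n^'n"
  assumes "orthogonal_matrix P"
  shows "x = (\<Sum>i\<in>UNIV. (column i P \<bullet> x) *\<^sub>R column i P)"
proof -
  have "x = (P ** transpose P) *v x"
    using assms by (simp add: orthogonal_matrix_def)
  also have "\<dots> = P *v (transpose P *v x)" by (simp only: matrix_vector_mul_assoc)
  also have "\<dots> = (\<Sum>i\<in>UNIV. ((transpose P *v x) $ i) *\<^sub>R column i P)"
    by (simp add: matrix_mult_sum scalar_mult_eq_scaleR)
  also have "(\<lambda>i. (transpose P *v x) $ i) = (\<lambda>i. column i P \<bullet> x)"
    by (simp add: fun_eq_iff matrix_vector_mult_def transpose_def column_def inner_vec_def mult.commute)
  finally show ?thesis .
qed

lemma orthogonal_matrix_inner_self:
  fixes P :: "real^'n^'n"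
  assumes "orthogonal_matrix P"
  shows "x \<bullet> x = (\<Sum>i\<in>UNIV. (column i P \<bullet> x)\<^sup>2)"
  by (subst orthogonal_matrix_column_expansion[OF assms, of x])
     (simp add: inner_sum_left power2_eq_square)

lemma orthogonal_matrix_column_inner_span:
  fixes P :: "real^'n^'n"
  assumes P: "orthogonal_matrix P" and x: "x \<in> span ((\<lambda>i. column i P) ` J)" and "j \<notin> J"
  shows "column j P \<bullet> x = 0"
proof -
  have "orthogonal (column j P) x"
    using x
  proof (rule orthogonal_to_span)
    fix y assume "y \<in> (\<lambda>i. column i P) ` J"
    then show "orthogonal (column j P) y"
      using \<open>j \<notin> J\<close> by (auto simp: orthogonal_def orthogonal_matrix_column_inner[OF P])
  qed
  then show ?thesis by (simp add: orthogonal_def)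
qed

lemma dim_span_orthogonal_matrix_columns:
  fixes P :: "real^'n^'n"
  assumes P: "orthogonal_matrix P"
  shows "dim (span ((\<lambda>i. column i P) ` J)) = card J"
proof -
  have inj: "inj (\<lambda>i. column i P)"
    by (rule injI) (metis P orthogonal_matrix_column_inner zero_neq_one)
  have "pairwise orthogonal ((\<lambda>i. column i P) ` J)"
    by (auto simp: pairwise_def orthogonal_def orthogonal_matrix_column_inner[OF P])
  moreover have "column i P \<noteq> 0" for i
    using orthogonal_matrix_column_inner[OF P, of i i] by auto
  then have "0 \<notin> (\<lambda>i. column i P) ` J" by auto
  ultimately have "independent ((\<lambda>i. column i P) ` J)"
    by (rule pairwise_orthogonal_independent)
  then show ?thesis
    using inj by (simp add: dim_eq_card_independent card_image inj_on_subset)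
qed

lemma det_charmatrix_diagonalized:
  fixes M Q :: "real^'n^'n"
  assumes Q: "orthogonal_matrix Q" and ev: "\<And>i. M *v column i Q = \<mu> i *\<^sub>R column i Q"
  shows "det (mat x - M) = (\<Prod>i\<in>UNIV. x - \<mu> i)"
proof -
  let ?N = "mat x - M"
  have "(transpose Q ** ?N ** Q) $ i $ j = (if i = j then x - \<mu> i else 0)" for i j
  proof -
    have "(transpose Q ** ?N ** Q) $ i $ j = column i Q \<bullet> (?N *v column j Q)"
      by (simp only: matrix_mul_assoc[symmetric] transpose_matrix_mult_entry column_matrix_matrix_mult)
    also have "?N *v column j Q = (x - \<mu> j) *\<^sub>R column j Q"
      by (simp add: matrix_vector_mult_diff_rdistrib ev algebra_simps mat_matrix_vector_mult)
    finally show ?thesis by (simp add: orthogonal_matrix_column_inner[OF Q])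
  qed
  then have "det (transpose Q ** ?N ** Q) = (\<Prod>i\<in>UNIV. x - \<mu> i)"
    by (subst det_diagonal) auto
  moreover have "det (transpose Q ** ?N ** Q) = det ?N * (det Q * det Q)"
    by (simp add: det_mul det_transpose)
  moreover have "det Q * det Q = 1" using det_orthogonal_matrix[OF Q] by auto
  ultimately show ?thesis by simp
qed

lemma order_prod_mset_linear_factors:
  fixes a :: "'a::idom"
  shows "order a (\<Prod>e\<in>#A. [:-e, 1:]) = count A a"
proof (induction A)
  case (add e A)
  have "order a [:-e, 1:] = (if e = a then 1 else 0)"
    using order_power_n_n[of a 1] by (auto intro: order_0I)
  moreover have "(0::'a poly) \<notin># image_mset (\<lambda>e. [:-e, 1:]) A" by auto
  then have "[:-e, 1:] * (\<Prod>e\<in>#A. [:-e, 1:]) \<noteq> 0"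
    by (metis prod_mset_zero_iff no_zero_divisors pCons_eq_0_iff one_neq_zero)
  ultimately show ?case
    using add.IH order_mult[of "[:-e, 1:]" "\<Prod>e\<in>#A. [:-e, 1:]" a] by simp
qed simp

lemma prod_mset_linear_factors_inj:
  fixes A B :: "'a::idom multiset"
  assumes "(\<Prod>e\<in>#A. [:-e, 1:]) = (\<Prod>e\<in>#B. [:-e, 1:])"
  shows "A = B"
  by (metis assms multiset_eqI order_prod_mset_linear_factors)

lemma eigenvalue_list_diagonalized:
  fixes M Q :: "real^'n^'n"
  assumes "orthogonal_matrix Q" "\<And>i. M *v column i Q = \<mu> i *\<^sub>R column i Q"
    and "eigenvalue_list M es"
  shows "mset es = image_mset \<mu> (mset_set UNIV)"
proof (rule prod_mset_linear_factors_inj, rule poly_ext)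
  fix x
  have "(\<Prod>e\<leftarrow>es. x - e) = (\<Prod>i\<in>UNIV. x - \<mu> i)"
    using assms det_charmatrix_diagonalized unfolding eigenvalue_list_def by metis
  then show "poly (\<Prod>e\<in>#mset es. [:-e, 1:]) x = poly (\<Prod>e\<in>#image_mset \<mu> (mset_set UNIV). [:-e, 1:]) x"
    by (simp add: poly_prod_mset prod_unfold_prod_mset prod_mset_prod_list[symmetric]
        multiset.map_comp o_def)
qed

lemma length_filter_eq_card_of_mset_eq_image:
  assumes "mset es = image_mset \<alpha> (mset_set (UNIV::'n::finite set))"
  shows "length (filter P es) = card {i. P (\<alpha> i)}"
proof -
  have "length (filter P es) = size (filter_mset P (mset es))"
    by (metis mset_filter size_mset)
  also have "\<dots> = size (image_mset \<alpha> (filter_mset (\<lambda>i. P (\<alpha> i)) (mset_set UNIV)))"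
    using assms by (simp add: image_mset_filter_mset_swap[symmetric])
  finally show ?thesis by simp
qed

section \<open>Weyl's inequality\<close>

lemma diagonalized_quadratic_form:
  fixes P A :: "real^'n^'n"
  assumes P: "orthogonal_matrix P" and sym: "transpose A = A"
    and ev: "\<And>i. A *v column i P = \<alpha> i *\<^sub>R column i P"
  shows "x \<bullet> (A *v x) = (\<Sum>i\<in>UNIV. \<alpha> i * (column i P \<bullet> x)\<^sup>2)"
proof -
  have "x \<bullet> (A *v x) = (\<Sum>i\<in>UNIV. (column i P \<bullet> x) * (column i P \<bullet> (A *v x)))"
    by (subst orthogonal_matrix_column_expansion[OF P, of x]) (simp add: inner_sum_left)
  also have "\<dots> = (\<Sum>i\<in>UNIV. \<alpha> i * (column i P \<bullet> x)\<^sup>2)"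
  proof (rule sum.cong[OF refl])
    fix i
    have "column i P \<bullet> (A *v x) = \<alpha> i * (column i P \<bullet> x)"
      using symmetric_matrix_inner[OF sym, of "column i P" x] by (simp add: ev)
    then show "(column i P \<bullet> x) * (column i P \<bullet> (A *v x)) = \<alpha> i * (column i P \<bullet> x)\<^sup>2"
      by (simp add: power2_eq_square)
  qed
  finally show ?thesis .
qed

lemma shifted_diagonalized_quadratic_form:
  fixes P A :: "real^'n^'n"
  assumes P: "orthogonal_matrix P" and sym: "transpose A = A"
    and ev: "\<And>i. A *v column i P = \<alpha> i *\<^sub>R column i P"
  shows "x \<bullet> (A *v x) - c * (x \<bullet> x) = (\<Sum>i\<in>UNIV. (\<alpha> i - c) * (column i P \<bullet> x)\<^sup>2)"
  by (simp add: diagonalized_quadratic_form[OF assms] orthogonal_matrix_inner_self[OF P]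
      sum_distrib_left sum_subtractf[symmetric] algebra_simps)

lemma quadratic_form_gt_on_eigenspan:
  fixes P A :: "real^'n^'n"
  assumes P: "orthogonal_matrix P" and sym: "transpose A = A"
    and ev: "\<And>i. A *v column i P = \<alpha> i *\<^sub>R column i P"
    and x: "x \<in> span ((\<lambda>i. column i P) ` {i. c < \<alpha> i})" "x \<noteq> 0"
  shows "c * (x \<bullet> x) < x \<bullet> (A *v x)"
proof -
  have coord: "column i P \<bullet> x = 0" if "\<not> c < \<alpha> i" for i
    using orthogonal_matrix_column_inner_span[OF P x(1)] that by blast
  obtain k where k: "column k P \<bullet> x \<noteq> 0"
    using x(2) orthogonal_matrix_inner_self[OF P, of x] by force
  then have "c < \<alpha> k" using coord by blast
  have "0 < (\<Sum>i\<in>UNIV. (\<alpha> i - c) * (column i P \<bullet> x)\<^sup>2)"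
  proof (rule sum_pos2[of UNIV k])
    show "0 < (\<alpha> k - c) * (column k P \<bullet> x)\<^sup>2"
      using k \<open>c < \<alpha> k\<close> by simp
    show "0 \<le> (\<alpha> i - c) * (column i P \<bullet> x)\<^sup>2" for i
      using coord[of i] by (cases "c < \<alpha> i") auto
  qed auto
  then show ?thesis
    using shifted_diagonalized_quadratic_form[OF P sym ev, of x c] by simp
qed

lemma quadratic_form_le_on_eigenspan:
  fixes P A :: "real^'n^'n"
  assumes P: "orthogonal_matrix P" and sym: "transpose A = A"
    and ev: "\<And>i. A *v column i P = \<alpha> i *\<^sub>R column i P"
    and x: "x \<in> span ((\<lambda>i. column i P) ` {i. \<alpha> i \<le> c})"
  shows "x \<bullet> (A *v x) \<le> c * (x \<bullet> x)"
proof -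
  have "(\<Sum>i\<in>UNIV. (\<alpha> i - c) * (column i P \<bullet> x)\<^sup>2) \<le> 0"
  proof (rule sum_nonpos)
    show "(\<alpha> i - c) * (column i P \<bullet> x)\<^sup>2 \<le> 0" for i
      using orthogonal_matrix_column_inner_span[OF P x, of i]
      by (cases "\<alpha> i \<le> c") (auto simp: mult_nonpos_nonneg)
  qed
  then show ?thesis
    using shifted_diagonalized_quadratic_form[OF P sym ev, of x c] by simp
qed

lemma subspace_Int_nonzero:
  fixes V W :: "(real^'n) set"
  assumes "subspace V" "subspace W" "dim V + dim W > CARD('n)"
  obtains x where "x \<in> V" "x \<in> W" "x \<noteq> 0"
proof -
  have "dim {x + y |x y. x \<in> V \<and> y \<in> W} \<le> CARD('n)"
    using dim_subset_UNIV[of "{x + y |x y. x \<in> V \<and> y \<in> W}"] by simp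
  then have "dim (V \<inter> W) \<noteq> 0" using dim_sums_Int[OF assms(1,2)] assms(3) by linarith
  then have "\<not> V \<inter> W \<subseteq> {0}" by (simp flip: dim_eq_0)
  then show ?thesis using that by blast
qed

lemma card_eigenvalues_gt_le:
  fixes A B P Q :: "real^'n^'n"
  assumes symA: "transpose A = A" and symB: "transpose B = B"
    and P: "orthogonal_matrix P" and evA: "\<And>i. A *v column i P = \<alpha> i *\<^sub>R column i P"
    and Q: "orthogonal_matrix Q" and evB: "\<And>i. B *v column i Q = \<beta> i *\<^sub>R column i Q"
    and le: "\<And>x. x \<bullet> (A *v x) \<le> x \<bullet> (B *v x) + \<epsilon> * (x \<bullet> x)"
  shows "card {i. t + \<epsilon> < \<alpha> i} \<le> card {i. t < \<beta> i}"
proof (rule ccontr)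
  assume "\<not> ?thesis"
  moreover have "card {i. \<beta> i \<le> t} + card {i. t < \<beta> i} = CARD('n)"
    by (subst card_Un_disjoint[symmetric]) (auto intro: arg_cong[where f = card])
  ultimately have "dim (span ((\<lambda>i. column i P) ` {i. t + \<epsilon> < \<alpha> i}))
      + dim (span ((\<lambda>i. column i Q) ` {i. \<beta> i \<le> t})) > CARD('n)"
    unfolding dim_span_orthogonal_matrix_columns[OF P] dim_span_orthogonal_matrix_columns[OF Q]
    by linarith
  then obtain x where
    x: "x \<in> span ((\<lambda>i. column i P) ` {i. t + \<epsilon> < \<alpha> i})"
      "x \<in> span ((\<lambda>i. column i Q) ` {i. \<beta> i \<le> t})" "x \<noteq> 0"
    by (rule subspace_Int_nonzero[OF subspace_span subspace_span])
  have "(t + \<epsilon>) * (x \<bullet> x) < x \<bullet> (A *v x)"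
    by (rule quadratic_form_gt_on_eigenspan[OF P symA evA x(1,3)])
  also have "\<dots> \<le> t * (x \<bullet> x) + \<epsilon> * (x \<bullet> x)"
    using le[of x] quadratic_form_le_on_eigenspan[OF Q symB evB x(2)] by linarith
  finally show False by (simp add: algebra_simps)
qed

lemma spec_norm_nonneg: "spec_norm M \<ge> 0"
  unfolding spec_norm_def by (rule onorm_pos_le[OF matrix_vector_mul_bounded_linear])

lemma spec_norm_minus_commute: "spec_norm (A - B) = spec_norm (B - A)"
  using onorm_neg[of "\<lambda>x. (A - B) *v x"]
  by (simp add: spec_norm_def matrix_vector_mult_diff_rdistrib)

lemma abs_quadratic_form_le_spec_norm:
  "\<bar>x \<bullet> (M *v x)\<bar> \<le> spec_norm M * (x \<bullet> x)"
proof -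
  have "\<bar>x \<bullet> (M *v x)\<bar> \<le> norm x * norm (M *v x)" by (rule Cauchy_Schwarz_ineq2)
  also have "\<dots> \<le> norm x * (spec_norm M * norm x)"
    unfolding spec_norm_def
    by (intro mult_left_mono onorm[OF matrix_vector_mul_bounded_linear]) auto
  also have "\<dots> = spec_norm M * (x \<bullet> x)"
    by (simp add: power2_norm_eq_inner[symmetric] power2_eq_square)
  finally show ?thesis .
qed

lemma eigenvalue_list_count_gt_le:
  fixes A B :: "real^'n^'n"
  assumes symA: "transpose A = A" and symB: "transpose B = B"
    and "eigenvalue_list A ea" "eigenvalue_list B eb"
  shows "length (filter (\<lambda>e. t + spec_norm (A - B) < e) ea) \<le> length (filter (\<lambda>e. t < e) eb)"
proof -
  obtain P \<alpha> where P: "orthogonal_matrix P" and evA: "\<And>i. A *v column i P = \<alpha> i *\<^sub>R column i P"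
    using symmetric_matrix_diagonalizable[OF symA] by blast
  obtain Q \<beta> where Q: "orthogonal_matrix Q" and evB: "\<And>i. B *v column i Q = \<beta> i *\<^sub>R column i Q"
    using symmetric_matrix_diagonalizable[OF symB] by blast
  have "x \<bullet> (A *v x) \<le> x \<bullet> (B *v x) + spec_norm (A - B) * (x \<bullet> x)" for x
    using abs_quadratic_form_le_spec_norm[of x "A - B"]
    by (simp add: matrix_vector_mult_diff_rdistrib inner_diff_right)
  then have "card {i. t + spec_norm (A - B) < \<alpha> i} \<le> card {i. t < \<beta> i}"
    by (rule card_eigenvalues_gt_le[OF symA symB P evA Q evB])
  then show ?thesis
    using length_filter_eq_card_of_mset_eq_image eigenvalue_list_diagonalized assms P evA Q evB by metis
qed

section \<open>Matching the eigenvalues\<close>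

lemma sorted_nth_le_nth_add_of_count_gt_le:
  fixes xs ys :: "real list"
  assumes sx: "sorted xs" and sy: "sorted ys" and len: "length ys = length xs"
    and cnt: "\<And>t. length (filter (\<lambda>e. t + \<epsilon> < e) xs) \<le> length (filter (\<lambda>e. t < e) ys)"
    and i: "i < length xs"
  shows "xs ! i \<le> ys ! i + \<epsilon>"
proof (rule ccontr)
  assume "\<not> ?thesis"
  then have gt: "ys ! i + \<epsilon> < xs ! i" by simp
  define t where "t = ys ! i"
  define N where "N = length xs"
  have "{i..<N} \<subseteq> {j. j < length xs \<and> t + \<epsilon> < xs ! j}"
    using gt sorted_nth_mono[OF sx, of i] unfolding t_def N_def by fastforce
  then have "N - i \<le> card {j. j < length xs \<and> t + \<epsilon> < xs ! j}"
    by (metis card_atLeastLessThan card_mono finite_Collect_conjI finite_Collect_less_nat)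
  also have "\<dots> \<le> card {j. j < length ys \<and> t < ys ! j}"
    using cnt[of t] by (simp add: length_filter_conv_card)
  also have "\<dots> \<le> card {Suc i..<N}"
  proof (rule card_mono)
    show "{j. j < length ys \<and> t < ys ! j} \<subseteq> {Suc i..<N}"
      using sorted_nth_mono[OF sy, of _ i] i len unfolding t_def N_def by (fastforce simp: not_less_eq_eq)
  qed simp
  finally show False using i N_def by simp
qed

lemma close_rearrangement_of_count_gt_le:
  fixes xs ys :: "real list"
  assumes len: "length ys = length xs"
    and c1: "\<And>t. length (filter (\<lambda>e. t + \<epsilon> < e) xs) \<le> length (filter (\<lambda>e. t < e) ys)"
    and c2: "\<And>t. length (filter (\<lambda>e. t + \<epsilon> < e) ys) \<le> length (filter (\<lambda>e. t < e) xs)"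
  obtains zs where "mset zs = mset ys" "length zs = length xs"
    "\<And>i. i < length xs \<Longrightarrow> \<bar>xs ! i - zs ! i\<bar> \<le> \<epsilon>"
proof -
  define sx where "sx = sort xs"
  define sy where "sy = sort ys"
  have filt: "length (filter P (sort us)) = length (filter P us)" for P and us :: "real list"
    by (metis mset_filter mset_sort size_mset)
  have lsx: "length sx = length xs" and lsy: "length sy = length xs"
    unfolding sx_def sy_def using len by simp_all
  have close: "\<bar>sx ! i - sy ! i\<bar> \<le> \<epsilon>" if "i < length xs" for i
    using sorted_nth_le_nth_add_of_count_gt_le[of sx sy \<epsilon> i]
      sorted_nth_le_nth_add_of_count_gt_le[of sy sx \<epsilon> i]
    using that lsx lsy c1 c2 filt unfolding sx_def sy_def by fastforce
  obtain p where p: "p permutes {..<length sx}" "permute_list p sx = xs"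
    using mset_eq_permutation[of xs sx] unfolding sx_def by auto
  show thesis
  proof
    show "mset (permute_list p sy) = mset ys"
      using p(1) lsx lsy by (simp add: sy_def)
    show "length (permute_list p sy) = length xs" using lsy by simp
    fix i assume i: "i < length xs"
    then have "p i < length xs" using permutes_in_image[OF p(1)] lsx by auto
    moreover have "xs ! i = sx ! p i" "permute_list p sy ! i = sy ! p i"
      using p i lsx lsy permute_list_nth by (metis, metis)
    ultimately show "\<bar>xs ! i - permute_list p sy ! i\<bar> \<le> \<epsilon>" using close by simp
  qed
qed

lemma abs_sum_le_card_mult:
  fixes f :: "'a \<Rightarrow> real" and \<epsilon> :: real
  assumes "\<And>i. i \<in> A \<Longrightarrow> \<bar>f i\<bar> \<le> \<epsilon>"
  shows "\<bar>sum f A\<bar> \<le> card A * \<epsilon>"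
  using sum_abs[of f A] sum_bounded_above[of A "\<lambda>i. \<bar>f i\<bar>" \<epsilon>, OF assms] by linarith

lemma abs_sum_sub_sum_le_three_card:
  fixes a b :: "'a \<Rightarrow> real" and \<epsilon> :: real
  assumes fin: "finite S" "finite T" and card: "card S = K" "card T = K" and "\<epsilon> \<ge> 0"
    and on_T: "\<And>i. i \<in> T \<Longrightarrow> \<bar>a i - b i\<bar> \<le> \<epsilon>"
    and off_T: "\<And>i. i \<in> S - T \<Longrightarrow> \<bar>a i\<bar> \<le> \<epsilon>"
    and off_S: "\<And>i. i \<in> T - S \<Longrightarrow> \<bar>a i\<bar> \<le> \<epsilon>"
  shows "\<bar>sum a S - sum b T\<bar> \<le> 3 * K * \<epsilon>"
proof -
  have "sum a S - sum b T = sum a (S - T) - sum a (T - S) + sum (\<lambda>i. a i - b i) T"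
    using fin by (simp add: sum.Int_Diff[of S a T] sum.Int_Diff[of T a S] Int_commute sum_subtractf)
  moreover have "\<bar>sum (\<lambda>i. a i - b i) T\<bar> \<le> K * \<epsilon>"
    using abs_sum_le_card_mult[of T "\<lambda>i. a i - b i"] on_T card by simp
  moreover have "\<bar>sum a (S - T)\<bar> \<le> K * \<epsilon>"
    using abs_sum_le_card_mult[of "S - T" a] off_T card_mono[OF fin(1), of "S - T"] card \<open>\<epsilon> \<ge> 0\<close>
    by (smt (verit) Diff_subset mult_right_mono of_nat_mono)
  moreover have "\<bar>sum a (T - S)\<bar> \<le> K * \<epsilon>"
    using abs_sum_le_card_mult[of "T - S" a] off_S card_mono[OF fin(2), of "T - S"] card \<open>\<epsilon> \<ge> 0\<close>
    by (smt (verit) Diff_subset mult_right_mono of_nat_mono)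
  ultimately show ?thesis by linarith
qed

lemma abs_sum_take_sub_sum_nonzero_le:
  fixes a b :: "real list"
  assumes len: "length b = length a" and close: "\<And>i. i < length a \<Longrightarrow> \<bar>a ! i - b ! i\<bar> \<le> \<epsilon>"
    and "\<epsilon> \<ge> 0" and sorted: "sorted_wrt (\<lambda>x y. \<bar>x\<bar> \<ge> \<bar>y\<bar>) a"
    and K: "length (filter (\<lambda>e. e \<noteq> 0) b) = K" "K \<le> length a"
  shows "\<bar>sum_list (take K a) - sum_list (filter (\<lambda>e. e \<noteq> 0) b)\<bar> \<le> 3 * real K * \<epsilon>"
proof -
  define S where "S = {..<K}"
  define T where "T = {i. i < length a \<and> b ! i \<noteq> 0}"
  have card: "card S = K" "card T = K"
    using K len by (simp_all add: S_def T_def length_filter_conv_card)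
  have "finite T" by (simp add: T_def)
  have "sum_list (take K a) = (\<Sum>i\<in>S. a ! i)"
    using K by (simp add: S_def sum_list_sum_nth atLeast0LessThan)
  moreover have "sum_list (filter (\<lambda>e. e \<noteq> 0) b) = (\<Sum>i\<in>T. b ! i)"
  proof -
    have "sum_list (filter (\<lambda>e. e \<noteq> 0) b) = (\<Sum>i<length a. b ! i)"
      using sum_list_map_filter[of b "\<lambda>e. e \<noteq> 0" id] len
      by (simp add: sum_list_sum_nth atLeast0LessThan)
    also have "\<dots> = (\<Sum>i\<in>T. b ! i)"
      by (rule sum.mono_neutral_right) (auto simp: T_def)
    finally show ?thesis .
  qed
  moreover have small: "\<bar>a ! i\<bar> \<le> \<epsilon>" if "i < length a" "i \<notin> T" for i
    using close[of i] that by (simp add: T_def)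
  moreover have "\<bar>a ! j\<bar> \<le> \<epsilon>" if j: "j \<in> T - S" for j
  proof -
    \<comment> \<open>S and T have the same size, so T - S is non-empty only if S - T is.\<close>
    have "\<not> S \<subseteq> T"
      using j card card_subset_eq[OF \<open>finite T\<close>, of S] by auto
    then obtain i where i: "i \<in> S" "i \<notin> T" by blast
    have "\<bar>a ! j\<bar> \<le> \<bar>a ! i\<bar>"
      using i j sorted_wrt_nth_less[OF sorted, of i j] by (auto simp: S_def T_def)
    also have "\<dots> \<le> \<epsilon>" using small[of i] i K by (auto simp: S_def)
    finally show ?thesis .
  qed
  ultimately show ?thesis
    using abs_sum_sub_sum_le_three_card[of S T K \<epsilon> "\<lambda>i. a ! i" "\<lambda>i. b ! i"]
      card \<open>finite T\<close> \<open>\<epsilon> \<ge> 0\<close> close K by (auto simp: S_def T_def)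
qed

theorem lemmaA1:
  fixes A B :: "real^'n^'n" and K :: nat and ea eb :: "real list"
  assumes "transpose A = A" and "transpose B = B"
    and "eigenvalue_list A ea"
    and "sorted_wrt (\<lambda>x y. \<bar>x\<bar> \<ge> \<bar>y\<bar>) ea"
    and "eigenvalue_list B eb"
    and "length (filter (\<lambda>e. e \<noteq> 0) eb) = K"
    and "K \<le> CARD('n)"
  shows "\<bar>sum_list (take K ea) - sum_list (filter (\<lambda>e. e \<noteq> 0) eb)\<bar>
           \<le> 3 * real K * spec_norm (A - B)"
proof -
  have len: "length ea = CARD('n)" "length eb = CARD('n)"
    using assms(3,5) by (simp_all add: eigenvalue_list_def)
  have above: "length (filter (\<lambda>e. t + spec_norm (A - B) < e) ea) \<le> length (filter ((<) t) eb)" for t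
    by (rule eigenvalue_list_count_gt_le[OF assms(1,2,3,5)])
  have below: "length (filter (\<lambda>e. t + spec_norm (A - B) < e) eb) \<le> length (filter ((<) t) ea)" for t
    using eigenvalue_list_count_gt_le[OF assms(2,1,5,3)] by (simp add: spec_norm_minus_commute)
  obtain b where b: "mset b = mset eb" "length b = length ea"
    "\<And>i. i < length ea \<Longrightarrow> \<bar>ea ! i - b ! i\<bar> \<le> spec_norm (A - B)"
    using close_rearrangement_of_count_gt_le[of eb ea, OF _ above below] len by auto
  have "mset (filter (\<lambda>e. e \<noteq> 0) b) = mset (filter (\<lambda>e. e \<noteq> 0) eb)"
    using b(1) by simp
  then have "sum_list (filter (\<lambda>e. e \<noteq> 0) eb) = sum_list (filter (\<lambda>e. e \<noteq> 0) b)"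
    "length (filter (\<lambda>e. e \<noteq> 0) b) = K"
    using assms(6) by (metis sum_mset_sum_list, metis size_mset)
  then show ?thesis
    using abs_sum_take_sub_sum_nonzero_le[OF b(2,3) spec_norm_nonneg assms(4)] assms(7) len
    by simp
qed

end
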